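(* Consider the system $\frac{d\boldsymbol{x}}{dt}=\mathbf{A}\boldsymbol{x}+\mathbf{B}_p\boldsymbol{p}+\mathbf{B}_d\boldsymbol{d}$ on $\mathcal{T}=[0,t_f]$, with $\boldsymbol{x}\in\mathbb{R}^{N_x}$, $\boldsymbol{p}\in\mathbb{R}^{N_p}_+$, $\mathbf{A}$ having non-positive diagonal and non-negative off-diagonal entries, $\mathbf{B}_p\ge 0$ entrywise, given $\boldsymbol{d}$ and $\boldsymbol{x}_0$, power bounds $\boldsymbol{0}\le\boldsymbol{p}_{\min}\le\boldsymbol{p}_{\max}$ and state bounds $\boldsymbol{x}_{\min}\le\boldsymbol{x}_{\max}$. Let $\boldsymbol{\delta}:\mathcal{T}\to\mathbb{R}^{N_p}$ be a fixed dispatch plan with $\delta_j(t)\ge0$ and $\sum_{j}\delta_j(t)=1$ for all $t$; a total power trajectory $p_{\mathrm{tot}}\ge 0$ is dispatched as $p_j(t)=\delta_j(t)p_{\mathrm{tot}}(t)$. Define for $i=1,\dots,N_x$ $$\gamma_{+,i}(t)=\max_{0\le\tau\le t}\sum_{j}\big(e^{\mathbf{A}(t-\tau)}\mathbf{B}_p\big)_{i,j}\delta_j(\tau),\qquad \gamma_{-,i}(t)=\min_{0\le\tau\le t}\sum_{j}\big(e^{\mathbf{A}(t-\tau)}\mathbf{B}_p\big)_{i,j}\delta_j(\tau),$$ and assume $\gamma_{\pm,i}(t)>0$ for all $i$ and $t\in\mathcal{T}$. Let $\boldsymbol{p}_+$ and $\boldsymbol{p}_-$ be feasible power trajectories dispatched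 according to $\boldsymbol{\delta}$ (i.e. $\boldsymbol{p}_\pm=\boldsymbol{\delta}p_{\pm,\mathrm{tot}}$ with $p_{\pm,\mathrm{tot}}\ge 0$, satisfying the power bounds and, with the same $\boldsymbol{x}_0,\boldsymbol{d}$, the state bounds for all $t$), and define $$\mathrm{E}^{\mathrm{TI,c}}_{\mathrm{up}}(t)=\min_{i}\frac{1}{\gamma_{+,i}(t)}\Big(\int_0^t e^{\mathbf{A}(t-\tau)}\mathbf{B}_p\boldsymbol{p}_+(\tau)\,d\tau\Big)_i,\qquad \mathrm{E}^{\mathrm{TI,c}}_{\mathrm{down}}(t)=\max_{i}\frac{1}{\gamma_{-,i}(t)}\Big(\int_0^t e^{\mathbf{A}(t-\tau)}\mathbf{B}_p\boldsymbol{p}_-(\tau)\,d\tau\Big)_i.$$ If a total power trajectory $p_{a,\mathrm{tot}}\ge0$, dispatched as $\boldsymbol{p}_a=\boldsymbol{\delta}p_{a,\mathrm{tot}}$, satisfies $\boldsymbol{p}_{\min}\le\boldsymbol{p}_a(t)\le\boldsymbol{p}_{\max}$ and $\mathrm{E}^{\mathrm{TI,c}}_{\mathrm{down}}(t)\le\int_0^t p_{a,\mathrm{tot}}(\tau)\,d\tau\le\mathrm{E}^{\mathrm{TI,c}}_{\mathrm{up}}(t)$ for all $t\in\mathcal{T}$, then the resulting state $\boldsymbol{x}_a$ (same $\boldsymbol{x}_0,\boldsymbol{d}$) satisfies $\boldsymbol{x}_{\min}\le\boldsymbol{x}_a(t)\le\boldsymbol{x}_{\max}$ for all $t\in\ma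thcal{T}$.
   Context: Vector inequalities and integrals are componentwise. States are given by $\boldsymbol{x}(t)=e^{\mathbf{A}t}\boldsymbol{x}_0+\int_0^t e^{\mathbf{A}(t-\tau)}(\mathbf{B}_d\boldsymbol{d}(\tau)+\mathbf{B}_p\boldsymbol{p}(\tau))\,d\tau$. This is the "centralized" setting in which all inputs are managed as one pool receiving a total power request $p_{\mathrm{tot}}$. *)

theory Defs
  imports "HOL-Analysis.Analysis"
begin

definition mat_pow :: "real^'n^'n \<Rightarrow> nat \<Rightarrow> real^'n^'n" where
  "mat_pow M k = (((**) M) ^^ k) (mat 1)"

definition mexp :: "real^'n^'n \<Rightarrow> real^'n^'n" where
  "mexp M = (\<Sum>k. (1 / fact k) *\<^sub>R mat_pow M k)"

definition state ::
  "real^'n^'n \<Rightarrow> real^'k^'n \<Rightarrow> real^'m^'n \<Rightarrow> real^'n \<Rightarrow> (real \<Rightarrow> real^'k)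
     \<Rightarrow> (real \<Rightarrow> real^'m) \<Rightarrow> real \<Rightarrow> real^'n" where
  "state A Bd Bp x0 d p t =
     mexp (t *\<^sub>R A) *v x0
     + integral {0..t} (\<lambda>\<tau>. mexp ((t - \<tau>) *\<^sub>R A) *v (Bd *v d \<tau> + Bp *v p \<tau>))"

definition dispatch :: "(real \<Rightarrow> real^'m) \<Rightarrow> (real \<Rightarrow> real) \<Rightarrow> real \<Rightarrow> real^'m" where
  "dispatch \<delta> ptot t = ptot t *\<^sub>R \<delta> t"

definition gamma_plus ::
  "real^'n^'n \<Rightarrow> real^'m^'n \<Rightarrow> (real \<Rightarrow> real^'m) \<Rightarrow> real \<Rightarrow> 'n \<Rightarrow> real" where
  "gamma_plus A Bp \<delta> t i =
     (SUP \<tau>\<in>{0..t}. \<Sum>j\<in>UNIV. (mexp ((t - \<tau>) *\<^sub>R A) ** Bp) $ i $ j * \<delta> \<tau> $ j)"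

definition gamma_minus ::
  "real^'n^'n \<Rightarrow> real^'m^'n \<Rightarrow> (real \<Rightarrow> real^'m) \<Rightarrow> real \<Rightarrow> 'n \<Rightarrow> real" where
  "gamma_minus A Bp \<delta> t i =
     (INF \<tau>\<in>{0..t}. \<Sum>j\<in>UNIV. (mexp ((t - \<tau>) *\<^sub>R A) ** Bp) $ i $ j * \<delta> \<tau> $ j)"

definition forced :: "real^'n^'n \<Rightarrow> real^'m^'n \<Rightarrow> (real \<Rightarrow> real^'m) \<Rightarrow> real \<Rightarrow> real^'n" where
  "forced A Bp p t = integral {0..t} (\<lambda>\<tau>. mexp ((t - \<tau>) *\<^sub>R A) *v (Bp *v p \<tau>))"

definition E_up ::
  "real^'n^'n \<Rightarrow> real^'m^'n \<Rightarrow> (real \<Rightarrow> real^'m) \<Rightarrow> (real \<Rightarrow> real^'m) \<Rightarrow> real \<Rightarrow> real" where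
  "E_up A Bp \<delta> pplus t =
     Min (range (\<lambda>i::'n. forced A Bp pplus t $ i / gamma_plus A Bp \<delta> t i))"

definition E_down ::
  "real^'n^'n \<Rightarrow> real^'m^'n \<Rightarrow> (real \<Rightarrow> real^'m) \<Rightarrow> (real \<Rightarrow> real^'m) \<Rightarrow> real \<Rightarrow> real" where
  "E_down A Bp \<delta> pminus t =
     Max (range (\<lambda>i::'n. forced A Bp pminus t $ i / gamma_minus A Bp \<delta> t i))"

definition feasible_tot ::
  "real^'n^'n \<Rightarrow> real^'k^'n \<Rightarrow> real^'m^'n \<Rightarrow> real^'n \<Rightarrow> (real \<Rightarrow> real^'k)
   \<Rightarrow> real^'m \<Rightarrow> real^'m \<Rightarrow> real^'n \<Rightarrow> real^'n \<Rightarrow> real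
   \<Rightarrow> (real \<Rightarrow> real^'m) \<Rightarrow> (real \<Rightarrow> real) \<Rightarrow> bool" where
  "feasible_tot A Bd Bp x0 d pmin pmax xmin xmax tf \<delta> ptot \<longleftrightarrow>
     ptot integrable_on {0..tf} \<and>
     (\<forall>t\<in>{0..tf}. 0 \<le> ptot t) \<and>
     (\<forall>t\<in>{0..tf}. \<forall>j. pmin $ j \<le> dispatch \<delta> ptot t $ j \<and> dispatch \<delta> ptot t $ j \<le> pmax $ j) \<and>
     (\<forall>t\<in>{0..tf}. \<forall>i. xmin $ i \<le> state A Bd Bp x0 d (dispatch \<delta> ptot) t $ i
                      \<and> state A Bd Bp x0 d (dispatch \<delta> ptot) t $ i \<le> xmax $ i)"

end

theory Submission
  imports Defs
begin

text \<open>The state is the free response to \<open>x0\<close> and \<open>d\<close>, common to all power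
  trajectories, plus the forced response. For a dispatched trajectory the \<open>i\<close>-th
  component of the forced response is the integral over \<open>[0, t]\<close> of \<open>p_tot(\<tau>) g_i(t, \<tau>)\<close>
  with the dispatch gain \<open>g_i\<close>; since \<open>p_tot \<ge> 0\<close>, it lies between \<open>gamma_minus\<close> and
  \<open>gamma_plus\<close> times the energy, the integral of \<open>p_tot\<close> over \<open>[0, t]\<close>. The energy bounds on \<open>p_a\<close> therefore
  squeeze its forced response between those of \<open>p_-\<close> and \<open>p_+\<close>, and the state bounds of
  the feasible trajectories carry over.\<close>

section \<open>Continuity of the matrix exponential\<close>

lemma mat_pow_0 [simp]: "mat_pow M 0 = mat 1"
  by (simp add: mat_pow_def)

lemma mat_pow_Suc [simp]: "mat_pow M (Suc k) = M ** mat_pow M k"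
  by (simp add: mat_pow_def)

lemma mat_pow_scaleR: "mat_pow (s *\<^sub>R M) k = (s ^ k) *\<^sub>R mat_pow (M :: real^'n^'n) k"
  by (induction k) (simp_all add: matrix_scalar_ac flip: scalar_matrix_assoc)

lemma abs_mat_pow_nth_le:
  fixes M :: "real^'n^'n"
  shows "\<bar>mat_pow M k $ i $ j\<bar> \<le> (\<Sum>i\<in>UNIV. \<Sum>j\<in>UNIV. \<bar>M $ i $ j\<bar>) ^ k"
proof (induction k arbitrary: i j)
  case 0
  then show ?case by (simp add: mat_def)
next
  case (Suc k)
  define c where "c = (\<Sum>i\<in>UNIV. \<Sum>j\<in>UNIV. \<bar>M $ i $ j\<bar>)"
  have row_le: "(\<Sum>l\<in>UNIV. \<bar>M $ i $ l\<bar>) \<le> c"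
    unfolding c_def
    by (rule member_le_sum[where f = "\<lambda>i. \<Sum>l\<in>UNIV. \<bar>M $ i $ l\<bar>"]) (auto intro: sum_nonneg)
  have "\<bar>mat_pow M (Suc k) $ i $ j\<bar> = \<bar>\<Sum>l\<in>UNIV. M $ i $ l * mat_pow M k $ l $ j\<bar>"
    by (simp add: matrix_matrix_mult_def)
  also have "\<dots> \<le> (\<Sum>l\<in>UNIV. \<bar>M $ i $ l\<bar> * c ^ k)"
    by (rule order_trans[OF sum_abs], rule sum_mono)
      (simp add: abs_mult mult_left_mono Suc.IH[unfolded c_def[symmetric]])
  also have "\<dots> = (\<Sum>l\<in>UNIV. \<bar>M $ i $ l\<bar>) * c ^ k"
    by (simp add: sum_distrib_right)
  also have "\<dots> \<le> c * c ^ k"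
    using row_le by (rule mult_right_mono) (simp add: c_def sum_nonneg)
  finally show ?case by (simp add: c_def)
qed

lemma norm_matrix_le_sum_abs: "norm (X :: real^'m^'n) \<le> (\<Sum>i\<in>UNIV. \<Sum>j\<in>UNIV. \<bar>X $ i $ j\<bar>)"
proof -
  have "norm X \<le> (\<Sum>i\<in>UNIV. norm (X $ i))"
    unfolding norm_vec_def by (rule L2_set_le_sum) simp
  also have "\<dots> \<le> (\<Sum>i\<in>UNIV. \<Sum>j\<in>UNIV. \<bar>X $ i $ j\<bar>)"
    by (intro sum_mono norm_le_l1_cart)
  finally show ?thesis .
qed

lemma summable_mexp_series: "summable (\<lambda>k. (1 / fact k) *\<^sub>R mat_pow (M :: real^'n^'n) k)"
proof (rule summable_comparison_test')
  define c where "c = (\<Sum>i\<in>UNIV. \<Sum>j\<in>UNIV. \<bar>M $ i $ j\<bar>)"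
  show "summable (\<lambda>k. real (CARD('n) * CARD('n)) * (inverse (fact k) * c ^ k))"
    by (intro summable_mult summable_exp)
  show "norm ((1 / fact k) *\<^sub>R mat_pow M k) \<le> real (CARD('n) * CARD('n)) * (inverse (fact k) * c ^ k)"
    for k
  proof -
    have "norm ((1 / fact k) *\<^sub>R mat_pow M k) = norm (mat_pow M k) / fact k" by simp
    also have "\<dots> \<le> (\<Sum>i\<in>(UNIV::'n set). \<Sum>j\<in>(UNIV::'n set). c ^ k) / fact k"
      by (intro divide_right_mono order_trans[OF norm_matrix_le_sum_abs] sum_mono)
        (auto simp: c_def abs_mat_pow_nth_le)
    finally show ?thesis by (simp add: field_simps)
  qed
qed

lemma mexp_scaleR_nth:
  "mexp (s *\<^sub>R M) $ i $ j = (\<Sum>k. (mat_pow (M :: real^'n^'n) k $ i $ j / fact k) * s ^ k)"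
proof -
  have "bounded_linear (\<lambda>X::real^'n^'n. X $ i $ j)"
    by (rule bounded_linear_compose[of "\<lambda>x. x $ j"]) (rule bounded_linear_vec_nth)+
  then have "mexp (s *\<^sub>R M) $ i $ j = (\<Sum>k. ((1 / fact k) *\<^sub>R mat_pow (s *\<^sub>R M) k) $ i $ j)"
    unfolding mexp_def by (rule bounded_linear.suminf[OF _ summable_mexp_series])
  then show ?thesis by (simp add: mat_pow_scaleR mult.commute)
qed

lemma isCont_mexp_scaleR_nth: "isCont (\<lambda>s. mexp (s *\<^sub>R (M :: real^'n^'n)) $ i $ j) x"
proof -
  define c where "c = (\<Sum>i\<in>UNIV. \<Sum>j\<in>UNIV. \<bar>M $ i $ j\<bar>)"
  define K where "K = \<bar>x\<bar> + 1"
  have "summable (\<lambda>k. (mat_pow M k $ i $ j / fact k) * K ^ k)"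
  proof (rule summable_comparison_test'[OF summable_exp[of "c * K"]])
    fix k
    have "norm ((mat_pow M k $ i $ j / fact k) * K ^ k) = \<bar>mat_pow M k $ i $ j\<bar> * K ^ k / fact k"
      by (simp add: abs_mult K_def)
    also have "\<dots> \<le> c ^ k * K ^ k / fact k"
      by (intro divide_right_mono mult_right_mono) (auto simp: c_def abs_mat_pow_nth_le K_def)
    finally show "norm ((mat_pow M k $ i $ j / fact k) * K ^ k) \<le> inverse (fact k) * (c * K) ^ k"
      by (simp add: field_simps power_mult_distrib)
  qed
  then have "isCont (\<lambda>s. \<Sum>k. (mat_pow M k $ i $ j / fact k) * s ^ k) x"
    by (rule isCont_powser) (simp add: K_def)
  then show ?thesis by (simp add: mexp_scaleR_nth)
qed

lemma continuous_on_mexp_scaleR_nth: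
  assumes "continuous_on S f"
  shows "continuous_on S (\<lambda>\<tau>. mexp (f \<tau> *\<^sub>R (M :: real^'n^'n)) $ i $ j)"
  using continuous_on_compose[OF assms continuous_at_imp_continuous_on[OF ballI[OF isCont_mexp_scaleR_nth]]]
  by (simp add: o_def)

lemma continuous_on_mexp_scaleR:
  assumes "continuous_on S f"
  shows "continuous_on S (\<lambda>\<tau>. mexp (f \<tau> *\<^sub>R (M :: real^'n^'n)))"
proof -
  have "continuous_on S (\<lambda>\<tau>. \<chi> i. \<chi> j. mexp (f \<tau> *\<^sub>R M) $ i $ j)"
    by (intro continuous_on_vec_lambda continuous_on_mexp_scaleR_nth assms)
  then show ?thesis by simp
qed

lemma continuous_on_mexp_scaleR_mult:
  assumes "continuous_on S f"
  shows "continuous_on S (\<lambda>\<tau>. mexp (f \<tau> *\<^sub>R (M :: real^'n^'n)) ** (B :: real^'m^'n))"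
proof -
  have "continuous_on S (\<lambda>\<tau>. \<chi> i. \<chi> j. \<Sum>l\<in>UNIV. mexp (f \<tau> *\<^sub>R M) $ i $ l * B $ l $ j)"
    by (intro continuous_on_vec_lambda continuous_on_sum continuous_on_mult continuous_on_const
        continuous_on_mexp_scaleR_nth assms)
  then show ?thesis by (simp add: matrix_matrix_mult_def)
qed

lemma bilinear_matrix_vector_mult: "bilinear (\<lambda>(X::real^'m^'n) (v::real^'m). X *v v)"
  unfolding bilinear_def
  by (auto simp: linear_iff matrix_vector_mult_add_rdistrib matrix_vector_right_distrib
      scaleR_matrix_vector_assoc matrix_vector_mult_scaleR)

lemma absolutely_integrable_continuous_matrix_vector_mult:
  fixes F :: "real \<Rightarrow> real^'m^'n" and w :: "real \<Rightarrow> real^'m"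
  assumes "continuous_on {a..b} F" and "w absolutely_integrable_on {a..b}"
  shows "(\<lambda>\<tau>. F \<tau> *v w \<tau>) absolutely_integrable_on {a..b}"
  using absolutely_integrable_bounded_measurable_product[OF bilinear_matrix_vector_mult
      continuous_imp_measurable_on_sets_lebesgue[OF assms(1)] _
      compact_imp_bounded[OF compact_continuous_image[OF assms(1)]] assms(2)]
  by simp

lemma dispatch_absolutely_integrable:
  fixes \<delta> :: "real \<Rightarrow> real^'m"
  assumes "\<delta> \<in> borel_measurable (lebesgue_on S)" "S \<in> sets lebesgue" "bounded (\<delta> ` S)"
    and "p absolutely_integrable_on S"
  shows "dispatch \<delta> p absolutely_integrable_on S"
proof -
  have "bilinear (\<lambda>(v::real^'m) (c::real). c *\<^sub>R v)"
    by (simp add: bilinear_conv_bounded_bilinear bounded_bilinear.flip[OF bounded_bilinear_scaleR])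
  from absolutely_integrable_bounded_measurable_product[OF this assms]
  show ?thesis by (simp add: dispatch_def[abs_def])
qed

lemma bounded_image_if_stochastic:
  fixes \<delta> :: "'a \<Rightarrow> real^'m"
  assumes "\<forall>t\<in>S. \<forall>j. 0 \<le> \<delta> t $ j" and "\<forall>t\<in>S. (\<Sum>j\<in>UNIV. \<delta> t $ j) = 1"
  shows "bounded (\<delta> ` S)"
proof (rule boundedI[where B = 1])
  fix v assume "v \<in> \<delta> ` S"
  with assms have "\<forall>j. 0 \<le> v $ j" and "(\<Sum>j\<in>UNIV. v $ j) = 1" by auto
  then show "norm v \<le> 1" using norm_le_l1_cart[of v] by simp
qed

lemma state_eq_free_response_plus_forced:
  fixes A :: "real^'n^'n" and Bp :: "real^'m^'n" and Bd :: "real^'k^'n"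
  assumes "d absolutely_integrable_on {0..t}" and "P absolutely_integrable_on {0..t}"
  shows "state A Bd Bp x0 d P t = state A Bd Bp x0 d (\<lambda>_. 0) t + forced A Bp P t"
proof -
  have "(\<lambda>\<tau>. mexp ((t - \<tau>) *\<^sub>R A) *v (B *v w \<tau>)) integrable_on {0..t}"
    if "w absolutely_integrable_on {0..t}" for B :: "real^'l^'n" and w
  proof -
    have "(\<lambda>\<tau>. B *v w \<tau>) absolutely_integrable_on {0..t}"
      using absolutely_integrable_linear[OF that matrix_vector_mul_bounded_linear[of B]]
      by (simp add: o_def)
    from absolutely_integrable_continuous_matrix_vector_mult[OF
        continuous_on_mexp_scaleR[OF continuous_on_diff[OF continuous_on_const continuous_on_id]] this]
    show ?thesis by (simp add: absolutely_integrable_on_def)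
  qed
  from this[OF assms(1)] this[OF assms(2)] show ?thesis
    unfolding state_def forced_def matrix_vector_right_distrib
    by (simp add: integral_add add.assoc)
qed

text \<open>The gain from total power injected at time \<open>\<tau>\<close> to state \<open>i\<close> at time \<open>t\<close>;
  \<open>gamma_plus\<close> and \<open>gamma_minus\<close> are its extrema over \<open>[0, t]\<close>.\<close>

definition dispatch_gain ::
  "real^'n^'n \<Rightarrow> real^'m^'n \<Rightarrow> (real \<Rightarrow> real^'m) \<Rightarrow> real \<Rightarrow> 'n \<Rightarrow> real \<Rightarrow> real" where
  "dispatch_gain A Bp \<delta> t i \<tau> = (\<Sum>j\<in>UNIV. (mexp ((t - \<tau>) *\<^sub>R A) ** Bp) $ i $ j * \<delta> \<tau> $ j)"

lemma forced_dispatch_nth: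
  fixes A :: "real^'n^'n" and Bp :: "real^'m^'n"
  assumes "dispatch \<delta> p absolutely_integrable_on {0..t}"
  shows "(\<lambda>\<tau>. p \<tau> * dispatch_gain A Bp \<delta> t i \<tau>) integrable_on {0..t}"
    and "forced A Bp (dispatch \<delta> p) t $ i = integral {0..t} (\<lambda>\<tau>. p \<tau> * dispatch_gain A Bp \<delta> t i \<tau>)"
proof -
  let ?G = "\<lambda>\<tau>. mexp ((t - \<tau>) *\<^sub>R A) ** Bp"
  have "(\<lambda>\<tau>. ?G \<tau> *v dispatch \<delta> p \<tau>) integrable_on {0..t}"
    using absolutely_integrable_continuous_matrix_vector_mult[OF continuous_on_mexp_scaleR_mult[OF
          continuous_on_diff[OF continuous_on_const continuous_on_id]] assms]
    unfolding absolutely_integrable_on_def by blast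
  note integrable = this
  have nth_eq: "(?G \<tau> *v dispatch \<delta> p \<tau>) $ i = p \<tau> * dispatch_gain A Bp \<delta> t i \<tau>" for \<tau>
    by (simp add: matrix_vector_mult_def dispatch_def dispatch_gain_def sum_distrib_left
        mult.left_commute)
  show "(\<lambda>\<tau>. p \<tau> * dispatch_gain A Bp \<delta> t i \<tau>) integrable_on {0..t}"
    using integrable_linear[OF integrable bounded_linear_vec_nth[of i]] by (simp add: o_def nth_eq)
  show "forced A Bp (dispatch \<delta> p) t $ i = integral {0..t} (\<lambda>\<tau>. p \<tau> * dispatch_gain A Bp \<delta> t i \<tau>)"
    using integral_component_eq_cart[OF integrable, of i]
    unfolding forced_def by (simp add: matrix_vector_mul_assoc nth_eq)
qed

section \<open>Bounds through the extremal gains\<close>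

lemma bounded_dispatch_gain:
  fixes A :: "real^'n^'n" and Bp :: "real^'m^'n"
  assumes "bounded (\<delta> ` {0..t})"
  shows "bounded (dispatch_gain A Bp \<delta> t i ` {0..t})"
proof -
  let ?G = "\<lambda>\<tau>. mexp ((t - \<tau>) *\<^sub>R A) ** Bp"
  have "bounded (?G ` {0..t})"
    by (intro compact_imp_bounded compact_continuous_image continuous_on_mexp_scaleR_mult
        continuous_intros) simp
  then obtain CG where CG: "\<And>\<tau>. \<tau> \<in> {0..t} \<Longrightarrow> norm (?G \<tau>) \<le> CG"
    by (meson bounded_pos imageI)
  obtain C\<delta> where C\<delta>: "\<And>\<tau>. \<tau> \<in> {0..t} \<Longrightarrow> norm (\<delta> \<tau>) \<le> C\<delta>"
    using assms by (meson bounded_pos imageI)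
  obtain B where "B > 0" and B: "\<And>(X::real^'m^'n) v. norm (X *v v) \<le> B * norm X * norm v"
    using bilinear_bounded_pos[OF bilinear_matrix_vector_mult] by auto
  have "\<bar>dispatch_gain A Bp \<delta> t i \<tau>\<bar> \<le> B * CG * C\<delta>" if "\<tau> \<in> {0..t}" for \<tau>
  proof -
    have "\<bar>dispatch_gain A Bp \<delta> t i \<tau>\<bar> = \<bar>(?G \<tau> *v \<delta> \<tau>) $ i\<bar>"
      by (simp add: dispatch_gain_def matrix_vector_mult_def)
    also have "\<dots> \<le> B * norm (?G \<tau>) * norm (\<delta> \<tau>)"
      by (rule order_trans[OF component_le_norm_cart B])
    also have "\<dots> \<le> B * CG * C\<delta>"
    proof (rule mult_mono)
      show "B * norm (?G \<tau>) \<le> B * CG"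
        using \<open>B > 0\<close> CG[OF that] by simp
      show "0 \<le> B * CG"
        using \<open>B > 0\<close> order_trans[OF norm_ge_zero CG[OF that]] by simp
    qed (use C\<delta>[OF that] in simp_all)
    finally show ?thesis .
  qed
  then show ?thesis
    by (intro boundedI[where B = "B * CG * C\<delta>"]) auto
qed

lemma dispatch_gain_le_gamma_plus:
  assumes "bounded (\<delta> ` {0..t})" and "\<tau> \<in> {0..t}"
  shows "dispatch_gain A Bp \<delta> t i \<tau> \<le> gamma_plus A Bp \<delta> t i"
  unfolding gamma_plus_def dispatch_gain_def[symmetric]
  by (rule cSUP_upper[OF assms(2) bounded_imp_bdd_above[OF bounded_dispatch_gain[OF assms(1)]]])

lemma gamma_minus_le_dispatch_gain:
  assumes "bounded (\<delta> ` {0..t})" and "\<tau> \<in> {0..t}"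
  shows "gamma_minus A Bp \<delta> t i \<le> dispatch_gain A Bp \<delta> t i \<tau>"
  unfolding gamma_minus_def dispatch_gain_def[symmetric]
  by (rule cINF_lower[OF bounded_imp_bdd_below[OF bounded_dispatch_gain[OF assms(1)]] assms(2)])

lemma integral_mult_le_bound:
  fixes f g :: "'a::euclidean_space \<Rightarrow> real"
  assumes "f integrable_on S" and "(\<lambda>x. f x * g x) integrable_on S"
    and "\<And>x. x \<in> S \<Longrightarrow> 0 \<le> f x" and "\<And>x. x \<in> S \<Longrightarrow> g x \<le> c"
  shows "integral S (\<lambda>x. f x * g x) \<le> c * integral S f"
proof -
  have "integral S (\<lambda>x. f x * g x) \<le> integral S (\<lambda>x. f x * c)"
    using assms by (intro integral_le integrable_on_mult_left) (auto intro: mult_left_mono)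
  then show ?thesis by (simp add: mult.commute)
qed

lemma integral_mult_ge_bound:
  fixes f g :: "'a::euclidean_space \<Rightarrow> real"
  assumes "f integrable_on S" and "(\<lambda>x. f x * g x) integrable_on S"
    and "\<And>x. x \<in> S \<Longrightarrow> 0 \<le> f x" and "\<And>x. x \<in> S \<Longrightarrow> c \<le> g x"
  shows "c * integral S f \<le> integral S (\<lambda>x. f x * g x)"
proof -
  have "integral S (\<lambda>x. f x * c) \<le> integral S (\<lambda>x. f x * g x)"
    using assms by (intro integral_le integrable_on_mult_left) (auto intro: mult_left_mono)
  then show ?thesis by (simp add: mult.commute)
qed

lemma E_up_mult_gamma_plus_le_forced:
  assumes "0 < gamma_plus A Bp \<delta> t i"
  shows "gamma_plus A Bp \<delta> t i * E_up A Bp \<delta> P t \<le> forced A Bp P t $ i"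
proof -
  have "E_up A Bp \<delta> P t \<le> forced A Bp P t $ i / gamma_plus A Bp \<delta> t i"
    unfolding E_up_def by (rule Min_le) auto
  with assms show ?thesis by (simp add: pos_le_divide_eq mult.commute)
qed

lemma forced_le_E_down_mult_gamma_minus:
  assumes "0 < gamma_minus A Bp \<delta> t i"
  shows "forced A Bp P t $ i \<le> gamma_minus A Bp \<delta> t i * E_down A Bp \<delta> P t"
proof -
  have "forced A Bp P t $ i / gamma_minus A Bp \<delta> t i \<le> E_down A Bp \<delta> P t"
    unfolding E_down_def by (rule Max_ge) auto
  with assms show ?thesis by (simp add: pos_divide_le_eq mult.commute)
qed

lemma state_dispatch_nth_le_of_energy_le_E_up:
  fixes A :: "real^'n^'n" and Bp :: "real^'m^'n" and Bd :: "real^'k^'n"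
  assumes \<delta>: "\<delta> \<in> borel_measurable (lebesgue_on {0..t})" "bounded (\<delta> ` {0..t})"
    and d: "d absolutely_integrable_on {0..t}"
    and p: "p integrable_on {0..t}" "\<forall>\<tau>\<in>{0..t}. 0 \<le> p \<tau>"
    and q: "q integrable_on {0..t}" "\<forall>\<tau>\<in>{0..t}. 0 \<le> q \<tau>"
    and gamma: "0 < gamma_plus A Bp \<delta> t i"
    and energy: "integral {0..t} p \<le> E_up A Bp \<delta> (dispatch \<delta> q) t"
  shows "state A Bd Bp x0 d (dispatch \<delta> p) t $ i \<le> state A Bd Bp x0 d (dispatch \<delta> q) t $ i"
proof -
  have P: "dispatch \<delta> p absolutely_integrable_on {0..t}"
    and Q: "dispatch \<delta> q absolutely_integrable_on {0..t}"
    using p q by (auto intro!: dispatch_absolutely_integrable \<delta> nonnegative_absolutely_integrable_1)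
  have "forced A Bp (dispatch \<delta> p) t $ i \<le> gamma_plus A Bp \<delta> t i * integral {0..t} p"
    unfolding forced_dispatch_nth(2)[OF P]
    using p by (intro integral_mult_le_bound forced_dispatch_nth(1)[OF P]
        dispatch_gain_le_gamma_plus[OF \<delta>(2)]) auto
  also have "\<dots> \<le> gamma_plus A Bp \<delta> t i * E_up A Bp \<delta> (dispatch \<delta> q) t"
    using gamma energy by simp
  also have "\<dots> \<le> forced A Bp (dispatch \<delta> q) t $ i"
    by (rule E_up_mult_gamma_plus_le_forced[OF gamma])
  finally show ?thesis
    by (simp add: state_eq_free_response_plus_forced[OF d P] state_eq_free_response_plus_forced[OF d Q])
qed

lemma state_dispatch_nth_ge_of_E_down_le_energy:
  fixes A :: "real^'n^'n" and Bp :: "real^'m^'n" and Bd :: "real^'k^'n"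
  assumes \<delta>: "\<delta> \<in> borel_measurable (lebesgue_on {0..t})" "bounded (\<delta> ` {0..t})"
    and d: "d absolutely_integrable_on {0..t}"
    and p: "p integrable_on {0..t}" "\<forall>\<tau>\<in>{0..t}. 0 \<le> p \<tau>"
    and q: "q integrable_on {0..t}" "\<forall>\<tau>\<in>{0..t}. 0 \<le> q \<tau>"
    and gamma: "0 < gamma_minus A Bp \<delta> t i"
    and energy: "E_down A Bp \<delta> (dispatch \<delta> q) t \<le> integral {0..t} p"
  shows "state A Bd Bp x0 d (dispatch \<delta> q) t $ i \<le> state A Bd Bp x0 d (dispatch \<delta> p) t $ i"
proof -
  have P: "dispatch \<delta> p absolutely_integrable_on {0..t}"
    and Q: "dispatch \<delta> q absolutely_integrable_on {0..t}"
    using p q by (auto intro!: dispatch_absolutely_integrable \<delta> nonnegative_absolutely_integrable_1)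
  have "forced A Bp (dispatch \<delta> q) t $ i \<le> gamma_minus A Bp \<delta> t i * E_down A Bp \<delta> (dispatch \<delta> q) t"
    by (rule forced_le_E_down_mult_gamma_minus[OF gamma])
  also have "\<dots> \<le> gamma_minus A Bp \<delta> t i * integral {0..t} p"
    using gamma energy by simp
  also have "\<dots> \<le> forced A Bp (dispatch \<delta> p) t $ i"
    unfolding forced_dispatch_nth(2)[OF P]
    using p by (intro integral_mult_ge_bound forced_dispatch_nth(1)[OF P]
        gamma_minus_le_dispatch_gain[OF \<delta>(2)]) auto
  finally show ?thesis
    by (simp add: state_eq_free_response_plus_forced[OF d P] state_eq_free_response_plus_forced[OF d Q])
qed

theorem theorem4:
  fixes A :: "real^'n^'n" and Bp :: "real^'m^'n" and Bd :: "real^'k^'n"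
    and x0 :: "real^'n" and d :: "real \<Rightarrow> real^'k"
    and pmin pmax :: "real^'m" and xmin xmax :: "real^'n" and tf :: real
    and \<delta> :: "real \<Rightarrow> real^'m"
    and pplus_tot pminus_tot pa_tot :: "real \<Rightarrow> real"
  assumes tf: "0 \<le> tf"
    and A_diag: "\<forall>i. A $ i $ i \<le> 0"
    and A_offdiag: "\<forall>i j. i \<noteq> j \<longrightarrow> 0 \<le> A $ i $ j"
    and Bp_nonneg: "\<forall>i j. 0 \<le> Bp $ i $ j"
    and d_int: "d absolutely_integrable_on {0..tf}"
    and pbounds: "\<forall>j. 0 \<le> pmin $ j \<and> pmin $ j \<le> pmax $ j"
    and xbounds: "\<forall>i. xmin $ i \<le> xmax $ i"
    and \<delta>_meas: "\<delta> measurable_on {0..tf}"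
    and \<delta>_nonneg: "\<forall>t\<in>{0..tf}. \<forall>j. 0 \<le> \<delta> t $ j"
    and \<delta>_sum: "\<forall>t\<in>{0..tf}. (\<Sum>j\<in>UNIV. \<delta> t $ j) = 1"
    and gamma_pos: "\<forall>t\<in>{0..tf}. \<forall>i. 0 < gamma_plus A Bp \<delta> t i \<and> 0 < gamma_minus A Bp \<delta> t i"
    and feas_plus: "feasible_tot A Bd Bp x0 d pmin pmax xmin xmax tf \<delta> pplus_tot"
    and feas_minus: "feasible_tot A Bd Bp x0 d pmin pmax xmin xmax tf \<delta> pminus_tot"
    and pa_int: "pa_tot integrable_on {0..tf}"
    and pa_nonneg: "\<forall>t\<in>{0..tf}. 0 \<le> pa_tot t"
    and pa_bounds: "\<forall>t\<in>{0..tf}. \<forall>j. pmin $ j \<le> dispatch \<delta> pa_tot t $ j \<and> dispatch \<delta> pa_tot t $ j \<le> pmax $ j"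
    and pa_energy: "\<forall>t\<in>{0..tf}.
         E_down A Bp \<delta> (dispatch \<delta> pminus_tot) t \<le> integral {0..t} pa_tot \<and>
         integral {0..t} pa_tot \<le> E_up A Bp \<delta> (dispatch \<delta> pplus_tot) t"
  shows "\<forall>t\<in>{0..tf}. \<forall>i. xmin $ i \<le> state A Bd Bp x0 d (dispatch \<delta> pa_tot) t $ i
                         \<and> state A Bd Bp x0 d (dispatch \<delta> pa_tot) t $ i \<le> xmax $ i"
proof (intro ballI allI)
  fix t i assume t: "t \<in> {0..tf}"
  then have sub: "{0..t} \<subseteq> {0..tf}" by auto
  have \<delta>_t: "\<delta> \<in> borel_measurable (lebesgue_on {0..t})"
    using \<delta>_meas measurable_restrict_mono[OF _ sub] by (auto simp: measurable_on_iff_borel_measurable)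
  have \<delta>_bounded: "bounded (\<delta> ` {0..t})"
    using sub \<delta>_nonneg \<delta>_sum by (intro bounded_image_if_stochastic) auto
  have restrict: "r integrable_on {0..t}" "\<forall>\<tau>\<in>{0..t}. 0 \<le> r \<tau>"
    if "r integrable_on {0..tf}" "\<forall>\<tau>\<in>{0..tf}. 0 \<le> r \<tau>" for r :: "real \<Rightarrow> real"
    using integrable_on_subinterval[OF that(1) sub] that(2) sub by auto
  have d_t: "d absolutely_integrable_on {0..t}"
    by (rule absolutely_integrable_on_subinterval[OF d_int sub])
  have plus_int: "pplus_tot integrable_on {0..tf}" and plus_nonneg: "\<forall>\<tau>\<in>{0..tf}. 0 \<le> pplus_tot \<tau>"
    and plus_le: "state A Bd Bp x0 d (dispatch \<delta> pplus_tot) t $ i \<le> xmax $ i"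
    using feas_plus t unfolding feasible_tot_def by auto
  have minus_int: "pminus_tot integrable_on {0..tf}" and minus_nonneg: "\<forall>\<tau>\<in>{0..tf}. 0 \<le> pminus_tot \<tau>"
    and minus_ge: "xmin $ i \<le> state A Bd Bp x0 d (dispatch \<delta> pminus_tot) t $ i"
    using feas_minus t unfolding feasible_tot_def by auto
  have "state A Bd Bp x0 d (dispatch \<delta> pa_tot) t $ i \<le> state A Bd Bp x0 d (dispatch \<delta> pplus_tot) t $ i"
    by (rule state_dispatch_nth_le_of_energy_le_E_up[OF \<delta>_t \<delta>_bounded d_t
          restrict[OF pa_int pa_nonneg] restrict[OF plus_int plus_nonneg]])
      (use gamma_pos pa_energy t in auto)
  moreover have "state A Bd Bp x0 d (dispatch \<delta> pminus_tot) t $ i \<le> state A Bd Bp x0 d (dispatch \<delta> pa_tot) t $ i"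
    by (rule state_dispatch_nth_ge_of_E_down_le_energy[OF \<delta>_t \<delta>_bounded d_t
          restrict[OF pa_int pa_nonneg] restrict[OF minus_int minus_nonneg]])
      (use gamma_pos pa_energy t in auto)
  ultimately show "xmin $ i \<le> state A Bd Bp x0 d (dispatch \<delta> pa_tot) t $ i
      \<and> state A Bd Bp x0 d (dispatch \<delta> pa_tot) t $ i \<le> xmax $ i"
    using plus_le minus_ge by linarith
qed

end
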